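(* Let $d\in\mathbb{N}$, $\mathscr{a}\in\mathbb{R}$, $\mathscr{b}\in(\mathscr{a},\infty)$, for $u=(u_1,\dots,u_{d+1})\in\mathbb{R}^{d+1}$ let $I^u=\{x=(x_1,\dots,x_d)\in[\mathscr{a},\mathscr{b}]^d\colon u_{d+1}+\sum_{i=1}^d u_ix_i>0\}$, let $\lambda_d$ be the Lebesgue–Borel measure on $\mathbb{R}^d$, and let $v\in\mathbb{R}^{d+1}\setminus\{0\}$. Then $\limsup_{\mathbb{R}^{d+1}\ni u\to v}\lambda_d(I^u\,\Delta\, I^v)=0$.
   Context: $A\,\Delta\,B$ denotes the symmetric difference of sets $A$ and $B$. *)

theory Defs
  imports "HOL-Analysis.Analysis"
begin

text \<open>Points u = (u_1,...,u_d,u_{d+1}) of R^{d+1} are represented as pairs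
  (w, c) :: real^'n \<times> real, with w = (u_1,...,u_d) and c = u_{d+1}.\<close>

definition halfcube :: "real \<Rightarrow> real \<Rightarrow> ((real^'n) \<times> real) \<Rightarrow> (real^'n) set" where
  "halfcube a b u = {x. (\<forall>i. a \<le> x $ i \<and> x $ i \<le> b) \<and>
                        snd u + (\<Sum>i\<in>UNIV. fst u $ i * x $ i) > 0}"

definition symdiff :: "'a set \<Rightarrow> 'a set \<Rightarrow> 'a set" where
  "symdiff A B = (A - B) \<union> (B - A)"

end

theory Submission
  imports Defs
begin

text \<open>The symmetric difference of I^u and I^v lies in the cube and in the slab where the affine
  form of v is at most of size |u - v| (1 + R), R bounding the norm on the cube. As u \<rightarrow> v these
  slabs shrink to the hyperplane of v, a null set since v \<noteq> 0; continuity of the finite measure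
  from above finishes the argument.\<close>

definition open_halfspace :: "'a::real_inner \<times> real \<Rightarrow> 'a set" where
  "open_halfspace u = {x. 0 < snd u + fst u \<bullet> x}"

definition slab :: "'a::real_inner \<times> real \<Rightarrow> real \<Rightarrow> 'a set" where
  "slab v e = {x. \<bar>snd v + fst v \<bullet> x\<bar> \<le> e}"

lemma slab_in_sets_lborel: "slab v e \<in> sets lborel"
  unfolding slab_def sets_lborel by (intro borel_closed closed_Collect_le continuous_intros)

lemma halfcube_eq_cbox_Int_open_halfspace:
  "halfcube a b u = cbox (vec a) (vec b) \<inter> open_halfspace u"
  by (auto simp: halfcube_def open_halfspace_def mem_box_cart inner_vec_def inner_real_def)

lemma affine_form_diff_le:
  fixes u v :: "'a::real_inner \<times> real"
  shows "\<bar>(snd u + fst u \<bullet> x) - (snd v + fst v \<bullet> x)\<bar> \<le> dist u v * (1 + norm x)"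
proof -
  have "\<bar>(snd u + fst u \<bullet> x) - (snd v + fst v \<bullet> x)\<bar> = \<bar>snd (u - v) + fst (u - v) \<bullet> x\<bar>"
    by (simp add: inner_diff_left)
  also have "\<dots> \<le> \<bar>snd (u - v)\<bar> + norm (fst (u - v)) * norm x"
    by (intro order_trans[OF abs_triangle_ineq] add_mono order_refl Cauchy_Schwarz_ineq2)
  also have "\<dots> \<le> dist u v + dist u v * norm x"
    using norm_snd_le[of "snd (u - v)" "fst (u - v)"] norm_fst_le[of "fst (u - v)" "snd (u - v)"]
    by (intro add_mono mult_right_mono) (auto simp: dist_norm simp del: snd_diff fst_diff)
  finally show ?thesis by (simp add: algebra_simps)
qed

lemma symdiff_open_halfspace_subset_slab:
  assumes "K \<subseteq> cball 0 R"
  shows "K \<inter> symdiff (open_halfspace u) (open_halfspace v) \<subseteq> K \<inter> slab v (dist u v * (1 + R))"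
proof
  fix x assume x: "x \<in> K \<inter> symdiff (open_halfspace u) (open_halfspace v)"
  then have "(0 < snd u + fst u \<bullet> x) \<noteq> (0 < snd v + fst v \<bullet> x)"
    by (auto simp: symdiff_def open_halfspace_def)
  then have "\<bar>snd v + fst v \<bullet> x\<bar> \<le> \<bar>(snd u + fst u \<bullet> x) - (snd v + fst v \<bullet> x)\<bar>"
    by auto
  also have "\<dots> \<le> dist u v * (1 + norm x)"
    by (rule affine_form_diff_le)
  also have "\<dots> \<le> dist u v * (1 + R)"
    using x assms by (intro mult_left_mono) auto
  finally show "x \<in> K \<inter> slab v (dist u v * (1 + R))"
    using x by (simp add: slab_def)
qed

lemma emeasure_slab_LIMSEQ_0:
  fixes K :: "'a::euclidean_space set"
  assumes K: "bounded K" "K \<in> sets lborel" and "v \<noteq> 0"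
  shows "(\<lambda>N. emeasure lborel (K \<inter> slab v (1 / Suc N))) \<longlonglongrightarrow> 0"
proof -
  define S where "S N = K \<inter> slab v (1 / Suc N)" for N
  have S_sets: "range S \<subseteq> sets lborel"
    unfolding S_def by (intro image_subsetI sets.Int K(2) slab_in_sets_lborel)
  have "decseq S"
  proof (rule decseq_SucI)
    fix N
    have "1 / real (Suc (Suc N)) \<le> 1 / real (Suc N)"
      by (intro divide_left_mono) auto
    then show "S (Suc N) \<subseteq> S N"
      by (auto simp: S_def slab_def)
  qed
  moreover have "emeasure lborel (S N) \<noteq> \<infinity>" for N
    using emeasure_bounded_finite[of "S N"] K(1) by (simp add: S_def bounded_Int)
  moreover have "emeasure lborel (\<Inter> (range S)) = 0"
  proof -
    let ?H = "{x. fst v \<bullet> x = - snd v}"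
    have "\<Inter> (range S) \<subseteq> ?H"
    proof
      fix x assume "x \<in> \<Inter> (range S)"
      then have "\<bar>snd v + fst v \<bullet> x\<bar> \<le> 1 / Suc N" for N
        by (auto simp: S_def slab_def)
      then have "\<bar>snd v + fst v \<bullet> x\<bar> = 0"
        by (metis abs_ge_zero nat_approx_posE not_less order.not_eq_order_implies_strict)
      then show "x \<in> ?H" by simp
    qed
    moreover have "negligible ?H"
      using \<open>v \<noteq> 0\<close> by (intro negligible_hyperplane) (auto simp: prod_eq_iff)
    then have "?H \<in> null_sets lborel"
      using closed_hyperplane[of "fst v" "- snd v"]
      by (simp add: negligible_iff_null_sets null_sets_completion_iff)
    moreover have "\<Inter> (range S) \<in> sets lborel"
      using S_sets by blast
    ultimately show ?thesis
      using null_sets_subset by blast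
  qed
  ultimately show ?thesis
    using Lim_emeasure_decseq[OF S_sets] by (simp add: S_def)
qed

lemma tendsto_emeasure_symdiff_open_halfspace:
  fixes K :: "'a::euclidean_space set"
  assumes K: "bounded K" "K \<in> sets lborel" and "v \<noteq> 0"
  shows "((\<lambda>u. emeasure lborel (K \<inter> symdiff (open_halfspace u) (open_halfspace v))) \<longlongrightarrow> 0) (at v)"
proof (rule order_tendstoI)
  fix e :: ennreal assume "0 < e"
  then obtain N where N: "emeasure lborel (K \<inter> slab v (1 / Suc N)) < e"
    using order_tendstoD(2)[OF emeasure_slab_LIMSEQ_0[OF assms]] by (auto simp: eventually_sequentially)
  obtain R where R: "R > 0" "K \<subseteq> cball 0 R"
    using K(1) bounded_pos by (force simp: subset_iff)
  have "\<forall>\<^sub>F u in at v. dist u v < 1 / (Suc N * (1 + R))"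
    using R(1) by (intro tendstoD[OF tendsto_ident_at]) auto
  then show "\<forall>\<^sub>F u in at v. emeasure lborel (K \<inter> symdiff (open_halfspace u) (open_halfspace v)) < e"
  proof (rule eventually_mono)
    fix u assume "dist u v < 1 / (Suc N * (1 + R))"
    then have "dist u v * (1 + R) \<le> 1 / Suc N"
      using R(1) by (simp add: pos_le_divide_eq pos_less_divide_eq mult_ac)
    then have "K \<inter> symdiff (open_halfspace u) (open_halfspace v) \<subseteq> K \<inter> slab v (1 / Suc N)"
      using symdiff_open_halfspace_subset_slab[OF R(2)] by (fastforce simp: slab_def)
    then have "emeasure lborel (K \<inter> symdiff (open_halfspace u) (open_halfspace v))
        \<le> emeasure lborel (K \<inter> slab v (1 / Suc N))"
      by (intro emeasure_mono sets.Int K(2) slab_in_sets_lborel)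
    then show "emeasure lborel (K \<inter> symdiff (open_halfspace u) (open_halfspace v)) < e"
      using N by simp
  qed
qed simp

theorem lemma2p5:
  fixes a b :: real and v :: "(real^'n) \<times> real"
  assumes "a < b" and "v \<noteq> 0"
  shows "Limsup (at v) (\<lambda>u. emeasure lborel (symdiff (halfcube a b u) (halfcube a b v))) = 0"
proof -
  have "symdiff (halfcube a b u) (halfcube a b v)
      = cbox (vec a) (vec b) \<inter> symdiff (open_halfspace u) (open_halfspace v)" for u
    by (auto simp: halfcube_eq_cbox_Int_open_halfspace symdiff_def)
  then have "((\<lambda>u. emeasure lborel (symdiff (halfcube a b u) (halfcube a b v))) \<longlongrightarrow> 0) (at v)"
    using tendsto_emeasure_symdiff_open_halfspace[OF bounded_cbox _ \<open>v \<noteq> 0\<close>] by simp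
  then show ?thesis
    by (intro lim_imp_Limsup) auto
qed

end
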